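(* Let $\boldsymbol{z}^{(0)}=(z^{(0)}_1,\dots,z^{(0)}_n)\in[-1,1]^n$ with $\sum_{j=1}^nz^{(0)}_j=0$. Define $\boldsymbol{z}^{(1)},\boldsymbol{z}^{(2)},\dots$ recursively: for each $r\ge0$, let $i$ be the first index at which $\boldsymbol{z}^{(r)}$ attains its minimum and $\ell$ the first index at which it attains its maximum; $\boldsymbol{z}^{(r+1)}$ agrees with $\boldsymbol{z}^{(r)}$ except that $z^{(r+1)}_i=z^{(r+1)}_\ell=(z^{(r)}_i+z^{(r)}_\ell)/2$. Then $\boldsymbol{z}^{(n)}\in[-\tfrac12,\tfrac12]^n$. *)

theory Defs
  imports Complex_Main
begin

text \<open>Vectors in R^n are represented as functions nat => real, with coordinates
  indexed by 0..n-1 (coordinate j+1 of the paper is index j here).\<close>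

definition first_argmin :: "nat \<Rightarrow> (nat \<Rightarrow> real) \<Rightarrow> nat" where
  "first_argmin n z = (LEAST i. i < n \<and> (\<forall>j<n. z i \<le> z j))"

definition first_argmax :: "nat \<Rightarrow> (nat \<Rightarrow> real) \<Rightarrow> nat" where
  "first_argmax n z = (LEAST l. l < n \<and> (\<forall>j<n. z j \<le> z l))"

definition avg_step :: "nat \<Rightarrow> (nat \<Rightarrow> real) \<Rightarrow> (nat \<Rightarrow> real)" where
  "avg_step n z =
     (let i = first_argmin n z; l = first_argmax n z; m = (z i + z l) / 2
      in z(i := m, l := m))"

fun avg_iter :: "nat \<Rightarrow> (nat \<Rightarrow> real) \<Rightarrow> nat \<Rightarrow> (nat \<Rightarrow> real)" where
  "avg_iter n z 0 = z"
| "avg_iter n z (Suc r) = avg_step n (avg_iter n z r)"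

end

theory Submission
  imports Defs
begin

text \<open>A vector with zero sum has a nonpositive minimum and a nonnegative maximum, so if its
  entries lie in \<open>[-1, 1]\<close>, the average of its minimum and maximum lies in \<open>[-1/2, 1/2]\<close>.
  If any entry has absolute value above \<open>1/2\<close>, then so has the minimum or the maximum;
  hence each step strictly decreases the number of such entries, while the sum and the
  bound \<open>1\<close> are preserved. There are at most \<open>n\<close> such entries to begin with.\<close>

lemma sum_fun_upd:
  fixes f :: "'a \<Rightarrow> 'b::ab_group_add"
  assumes "finite A" "a \<in> A"
  shows "sum (f(a := b)) A = sum f A - f a + b"
proof -
  have "sum (f(a := b)) A = b + sum (f(a := b)) (A - {a})"
    using assms by (simp add: sum.remove)
  also have "sum (f(a := b)) (A - {a}) = sum f (A - {a})"
    by (rule sum.cong) auto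
  also have "sum f (A - {a}) = sum f A - f a"
    using assms by (simp add: sum_diff1)
  finally show ?thesis by (simp add: algebra_simps)
qed

lemma first_argmin_minimal:
  assumes "0 < n"
  shows "first_argmin n z < n \<and> (\<forall>j<n. z (first_argmin n z) \<le> z j)"
proof -
  obtain i where "is_arg_min z (\<lambda>j. j < n) i"
    using ex_is_arg_min_if_finite[of "{..<n}" z] assms by auto
  then show ?thesis
    unfolding first_argmin_def is_arg_min_linorder by (rule LeastI)
qed

lemma first_argmax_maximal:
  assumes "0 < n"
  shows "first_argmax n z < n \<and> (\<forall>j<n. z j \<le> z (first_argmax n z))"
proof -
  obtain l where "is_arg_min (\<lambda>j. - z j) (\<lambda>j. j < n) l"
    using ex_is_arg_min_if_finite[of "{..<n}" "\<lambda>j. - z j"] assms by auto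
  then show ?thesis
    unfolding first_argmax_def is_arg_min_linorder neg_le_iff_le by (rule LeastI)
qed

lemma avg_step_averages_extremes:
  assumes "0 < n"
  obtains i l where "i < n" "l < n" "\<And>j. j < n \<Longrightarrow> z i \<le> z j \<and> z j \<le> z l"
    and "avg_step n z = z(i := (z i + z l) / 2, l := (z i + z l) / 2)"
  using first_argmin_minimal[OF assms, of z] first_argmax_maximal[OF assms, of z]
  by (intro that[of "first_argmin n z" "first_argmax n z"]) (auto simp: avg_step_def Let_def)

lemma sum_avg_step: "(\<Sum>j<n. avg_step n z j) = (\<Sum>j<n. z j)"
proof (cases "n = 0")
  case False
  then have "0 < n"
    by simp
  then obtain i l where i: "i < n" and l: "l < n"
    and step: "avg_step n z = z(i := (z i + z l) / 2, l := (z i + z l) / 2)"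
    by (rule avg_step_averages_extremes[of n z]) auto
  define m where "m = (z i + z l) / 2"
  have "sum (avg_step n z) {..<n} = sum (z(i := m)) {..<n} - (z(i := m)) l + m"
    using l by (simp add: step m_def sum_fun_upd del: fun_upd_apply)
  also have "\<dots> = sum z {..<n} - z i + m - (z(i := m)) l + m"
    using i by (simp add: sum_fun_upd del: fun_upd_apply)
  also have "\<dots> = sum z {..<n}"
    by (cases "i = l") (simp_all add: m_def)
  finally show ?thesis .
qed simp

lemma abs_avg_step_le:
  assumes "\<forall>j<n. \<bar>z j\<bar> \<le> c" "j < n"
  shows "\<bar>avg_step n z j\<bar> \<le> c"
proof -
  from assms(2) have "0 < n"
    by simp
  then obtain i l where i: "i < n" and l: "l < n"
    and step: "avg_step n z = z(i := (z i + z l) / 2, l := (z i + z l) / 2)"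
    by (rule avg_step_averages_extremes[of n z]) auto
  have "\<bar>z i\<bar> \<le> c" "\<bar>z l\<bar> \<le> c"
    using assms(1) i l by auto
  then have "\<bar>(z i + z l) / 2\<bar> \<le> c"
    by (simp add: abs_le_iff)
  then show ?thesis
    using assms by (simp add: step)
qed

definition large_coords :: "nat \<Rightarrow> (nat \<Rightarrow> real) \<Rightarrow> nat set" where
  "large_coords n z = {j. j < n \<and> 1/2 < \<bar>z j\<bar>}"

lemma card_large_coords_le: "card (large_coords n z) \<le> n"
  using card_mono[of "{..<n}" "large_coords n z"] by (auto simp: large_coords_def)

lemma large_coords_avg_step_empty:
  assumes "large_coords n z = {}"
  shows "large_coords n (avg_step n z) = {}"
proof -
  from assms have "\<forall>j<n. \<bar>z j\<bar> \<le> 1/2"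
    unfolding large_coords_def by (metis (mono_tags, lifting) empty_Collect_eq not_less)
  then have "\<forall>j<n. \<bar>avg_step n z j\<bar> \<le> 1/2"
    using abs_avg_step_le by blast
  then show ?thesis
    by (auto simp: large_coords_def not_less)
qed

lemma card_large_coords_avg_step:
  assumes sum: "(\<Sum>j<n. z j) = 0" and bound: "\<forall>j<n. \<bar>z j\<bar> \<le> 1"
  shows "card (large_coords n (avg_step n z)) \<le> card (large_coords n z) - 1"
proof (cases "large_coords n z = {}")
  case True
  then show ?thesis
    by (simp add: large_coords_avg_step_empty)
next
  case False
  then have "0 < n"
    by (auto simp: large_coords_def)
  then obtain i l where i: "i < n" and l: "l < n"
    and extremes: "\<And>j. j < n \<Longrightarrow> z i \<le> z j \<and> z j \<le> z l"
    and step: "avg_step n z = z(i := (z i + z l) / 2, l := (z i + z l) / 2)"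
    by (rule avg_step_averages_extremes[of n z]) auto
  have "real n * z i \<le> 0" "0 \<le> real n * z l"
    using sum_bounded_below[of "{..<n}" "z i" z] sum_bounded_above[of "{..<n}" z "z l"]
      extremes sum by auto
  then have "z i \<le> 0" "0 \<le> z l"
    using \<open>0 < n\<close> by (simp_all add: mult_le_0_iff zero_le_mult_iff)
  then have "\<bar>(z i + z l) / 2\<bar> \<le> 1/2"
    using bound i l by (auto simp: abs_le_iff)
  then have shrink: "large_coords n (avg_step n z) \<subseteq> large_coords n z - {i, l}"
    by (auto simp: step large_coords_def)
  obtain j where "j < n" "1/2 < \<bar>z j\<bar>"
    using False by (auto simp: large_coords_def)
  then have "i \<in> large_coords n z \<or> l \<in> large_coords n z"
    using extremes[of j] i l by (auto simp: large_coords_def)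
  then obtain k where "k \<in> large_coords n z" "k \<in> {i, l}"
    by blast
  then have "card (large_coords n (avg_step n z)) \<le> card (large_coords n z - {k})"
    using shrink by (intro card_mono) (auto simp: large_coords_def)
  also have "\<dots> = card (large_coords n z) - 1"
    using \<open>k \<in> large_coords n z\<close> by (simp add: large_coords_def)
  finally show ?thesis .
qed

lemma sum_avg_iter: "(\<Sum>j<n. avg_iter n z r j) = (\<Sum>j<n. z j)"
  by (induction r) (simp_all add: sum_avg_step)

lemma abs_avg_iter_le:
  assumes "\<forall>j<n. \<bar>z j\<bar> \<le> c"
  shows "\<forall>j<n. \<bar>avg_iter n z r j\<bar> \<le> c"
  using assms by (induction r) (simp_all add: abs_avg_step_le)

lemma card_large_coords_avg_iter:
  assumes "(\<Sum>j<n. z j) = 0" "\<forall>j<n. \<bar>z j\<bar> \<le> 1"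
  shows "card (large_coords n (avg_iter n z r)) \<le> n - r"
proof (induction r)
  case (Suc r)
  have "card (large_coords n (avg_iter n z (Suc r))) \<le> card (large_coords n (avg_iter n z r)) - 1"
    using card_large_coords_avg_step sum_avg_iter abs_avg_iter_le assms by simp
  with Suc.IH show ?case by simp
qed (simp add: card_large_coords_le)

theorem lemma2p6:
  fixes n :: nat and z0 :: "nat \<Rightarrow> real"
  assumes "\<forall>j<n. z0 j \<in> {-1..1}"
    and "(\<Sum>j<n. z0 j) = 0"
  shows "\<forall>j<n. avg_iter n z0 n j \<in> {-1/2..1/2}"
proof -
  have bound: "\<forall>j<n. \<bar>z0 j\<bar> \<le> 1"
    using assms(1) by (auto simp: abs_le_iff)
  have "card (large_coords n (avg_iter n z0 n)) = 0"
    using card_large_coords_avg_iter[OF assms(2) bound, of n] by simp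
  then have "large_coords n (avg_iter n z0 n) = {}"
    by (simp add: large_coords_def)
  then show ?thesis
    by (auto simp: large_coords_def abs_le_iff)
qed

end
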